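(* Let $K,L$ be Markov kernels on a measurable space $S$, and let $(K^{(n)})_{n\ge2}$ and $(L^{(n)})_{n\ge2}$ be consistent extensions of $K$ and $L$ respectively. Then $(K^{(n)}L^{(n)})_{n\ge2}$ is a consistent extension of $KL$.
   Context: Composition: $(KL)(x,B)=\int L(y,B)K(x,dy)$. For $i_1,\dots,i_k\in\{1,\dots,n\}$ (repetitions allowed), $\pi^n_{i_1,\dots,i_k}(x_1,\dots,x_n)=(x_{i_1},\dots,x_{i_k})$. A family $(K^{(n)})_{n\ge1}$, $K^{(n)}$ a Markov kernel on $S^n$ with the product $\sigma$-algebra, is consistent if $K^{(n)}(\mathbf{x},(\pi^n_{i_1,\dots,i_k})^{-1}(B))=K^{(k)}(\pi^n_{i_1,\dots,i_k}(\mathbf{x}),B)$ for all $1\le k\le n$, all $i_1,\dots,i_k$, all $\mathbf{x}\in S^n$ and measurable $B\subset S^k$. A family $(K^{(n)})_{n\ge2}$ is a consistent extension of a kernel $K$ on $S$ if $(K^{(n)})_{n\ge1}$ with $K^{(1)}=K$ is consistent. *)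

theory Defs
  imports "HOL-Probability.Probability"
begin

definition powS :: "'a measure \<Rightarrow> nat \<Rightarrow> (nat \<Rightarrow> 'a) measure" where
  "powS S n = PiM {..<n} (\<lambda>_. S)"

definition markov_kernel :: "'b measure \<Rightarrow> ('b \<Rightarrow> 'b measure) \<Rightarrow> bool" where
  "markov_kernel M K \<longleftrightarrow> K \<in> M \<rightarrow>\<^sub>M prob_algebra M"

text \<open>Composition (KL)(x,B) = int L(y,B) K(x,dy).\<close>
definition kcomp :: "('b \<Rightarrow> 'b measure) \<Rightarrow> ('b \<Rightarrow> 'b measure) \<Rightarrow> ('b \<Rightarrow> 'b measure)" where
  "kcomp K L = (\<lambda>x. K x \<bind> L)"

text \<open>Projection pi^n_{i_1..i_k}, with 0-based indices given by idx : {0..<k} -> {0..<n}.\<close>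
definition proj :: "nat \<Rightarrow> (nat \<Rightarrow> nat) \<Rightarrow> (nat \<Rightarrow> 'a) \<Rightarrow> (nat \<Rightarrow> 'a)" where
  "proj k idx x = (\<lambda>j\<in>{..<k}. x (idx j))"

definition consistent :: "'a measure \<Rightarrow> (nat \<Rightarrow> (nat \<Rightarrow> 'a) \<Rightarrow> (nat \<Rightarrow> 'a) measure) \<Rightarrow> bool" where
  "consistent S F \<longleftrightarrow>
     (\<forall>n\<ge>1. markov_kernel (powS S n) (F n)) \<and>
     (\<forall>n k idx x B. 1 \<le> k \<and> k \<le> n \<and> (\<forall>i<k. idx i < n) \<and>
        x \<in> space (powS S n) \<and> B \<in> sets (powS S k) \<longrightarrow>
        emeasure (F n x) (proj k idx -` B \<inter> space (powS S n)) = emeasure (F k (proj k idx x)) B)"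

definition lift1 :: "'a measure \<Rightarrow> ('a \<Rightarrow> 'a measure) \<Rightarrow> (nat \<Rightarrow> 'a) \<Rightarrow> (nat \<Rightarrow> 'a) measure" where
  "lift1 S K = (\<lambda>x. distr (K (x 0)) (powS S 1) (\<lambda>y. \<lambda>j\<in>{..<1::nat}. y))"

text \<open>(F n)_{n>=2} is a consistent extension of K: the family with F 1 := K is consistent.\<close>
definition consistent_extension ::
  "'a measure \<Rightarrow> ('a \<Rightarrow> 'a measure) \<Rightarrow> (nat \<Rightarrow> (nat \<Rightarrow> 'a) \<Rightarrow> (nat \<Rightarrow> 'a) measure) \<Rightarrow> bool" where
  "consistent_extension S K F \<longleftrightarrow>
     consistent S (\<lambda>n. if n = 1 then lift1 S K else F n)"

end

theory Submission
  imports Defs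
begin

(* Consistency says that the image of F n x under a coordinate projection p is F k (p x).
   Image measures commute with the monadic bind, so for composed kernels
     p(F n x >>= G n) = F n x >>= (p o G n) = F n x >>= (G k o p) = p(F n x) >>= G k
                      = F k (p x) >>= G k.
   In dimension 1 the kernels are images under the isomorphism S = S^1, which likewise
   commutes with composition. *)

lemma measurable_proj:
  assumes "\<forall>i<k. idx i < n"
  shows "proj k idx \<in> powS S n \<rightarrow>\<^sub>M powS S k"
  unfolding proj_def powS_def
  using assms by (intro measurable_restrict measurable_component_singleton) auto

lemma measurable_singleton_tuple: "(\<lambda>y. \<lambda>j\<in>{..<1::nat}. y) \<in> S \<rightarrow>\<^sub>M powS S 1"
  unfolding powS_def by (intro measurable_restrict) auto

lemma markov_kernel_kcomp:
  assumes "markov_kernel M K" and "markov_kernel M L"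
  shows "markov_kernel M (kcomp K L)"
  using assms unfolding markov_kernel_def kcomp_def by (rule measurable_bind_prob_space)

lemma markov_kernel_lift1:
  assumes "markov_kernel S K"
  shows "markov_kernel (powS S 1) (lift1 S K)"
proof -
  have "(\<lambda>x. x 0) \<in> powS S 1 \<rightarrow>\<^sub>M S"
    unfolding powS_def by (rule measurable_component_singleton) simp
  then have "(\<lambda>x. K (x 0)) \<in> powS S 1 \<rightarrow>\<^sub>M prob_algebra S"
    using assms unfolding markov_kernel_def by (rule measurable_compose)
  then show ?thesis
    unfolding markov_kernel_def lift1_def
    by (rule measurable_compose[OF _ measurable_distr_prob_space[OF measurable_singleton_tuple]])
qed

lemma lift1_kcomp:
  assumes K: "markov_kernel S K" and L: "markov_kernel S L" and x: "x \<in> space (powS S 1)"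
  shows "lift1 S (kcomp K L) x = kcomp (lift1 S K) (lift1 S L) x"
proof -
  let ?e = "\<lambda>y. \<lambda>j\<in>{..<1::nat}. y"
  have "x 0 \<in> space S" using x by (auto simp: powS_def space_PiM)
  then have Kx: "K (x 0) \<in> space (prob_algebra S)"
    using K unfolding markov_kernel_def by (auto dest: measurable_space)
  then have sets_Kx: "sets (K (x 0)) = sets S" and nonempty: "space (K (x 0)) \<noteq> {}"
    by (auto simp: space_prob_algebra prob_space.not_empty)
  have e: "?e \<in> K (x 0) \<rightarrow>\<^sub>M powS S 1"
    unfolding measurable_cong_sets[OF sets_Kx refl] by (rule measurable_singleton_tuple)
  have L': "L \<in> K (x 0) \<rightarrow>\<^sub>M subprob_algebra S"
    using L unfolding markov_kernel_def measurable_cong_sets[OF sets_Kx refl]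
    by (rule measurable_prob_algebraD)
  have "kcomp (lift1 S K) (lift1 S L) x = distr (K (x 0)) (powS S 1) ?e \<bind> lift1 S L"
    unfolding kcomp_def lift1_def ..
  also have "\<dots> = K (x 0) \<bind> (\<lambda>y. distr (L y) (powS S 1) ?e)"
    using markov_kernel_lift1[OF L] unfolding markov_kernel_def
    by (subst bind_distr[OF e measurable_prob_algebraD nonempty]) (simp_all add: lift1_def)
  also have "\<dots> = distr (K (x 0) \<bind> L) (powS S 1) ?e"
    by (rule distr_bind[OF L' nonempty measurable_singleton_tuple, symmetric])
  finally show ?thesis unfolding kcomp_def lift1_def by simp
qed

lemma emeasure_distr_proj:
  assumes F: "markov_kernel (powS S n) F" and idx: "\<forall>i<k. idx i < n"
    and x: "x \<in> space (powS S n)" and B: "B \<in> sets (powS S k)"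
  shows "emeasure (distr (F x) (powS S k) (proj k idx)) B
    = emeasure (F x) (proj k idx -` B \<inter> space (powS S n))"
proof -
  have Fx: "F x \<in> space (prob_algebra (powS S n))"
    using F x unfolding markov_kernel_def by (auto dest: measurable_space)
  then have "space (F x) = space (powS S n)"
    by (intro sets_eq_imp_space_eq) (simp add: space_prob_algebra)
  moreover have "proj k idx \<in> F x \<rightarrow>\<^sub>M powS S k"
    using measurable_proj[OF idx] Fx by (simp add: space_prob_algebra cong: measurable_cong_sets)
  ultimately show ?thesis
    using B by (simp add: emeasure_distr)
qed

lemma consistent_distr_proj:
  assumes F: "consistent S F" and k: "1 \<le> k" "k \<le> n" and idx: "\<forall>i<k. idx i < n"
    and x: "x \<in> space (powS S n)"
  shows "distr (F n x) (powS S k) (proj k idx) = F k (proj k idx x)"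
proof (rule measure_eqI)
  have "F k \<in> powS S k \<rightarrow>\<^sub>M prob_algebra (powS S k)"
    using F k unfolding consistent_def markov_kernel_def by simp
  moreover have "proj k idx x \<in> space (powS S k)"
    using measurable_proj[OF idx] x by (rule measurable_space)
  ultimately show "sets (distr (F n x) (powS S k) (proj k idx)) = sets (F k (proj k idx x))"
    by (auto simp: space_prob_algebra dest: measurable_space)
next
  fix B assume "B \<in> sets (distr (F n x) (powS S k) (proj k idx))"
  then have B: "B \<in> sets (powS S k)" by simp
  have "markov_kernel (powS S n) (F n)"
    using F k unfolding consistent_def by simp
  then have "emeasure (distr (F n x) (powS S k) (proj k idx)) B
      = emeasure (F n x) (proj k idx -` B \<inter> space (powS S n))"
    using idx x B by (rule emeasure_distr_proj)
  also have "\<dots> = emeasure (F k (proj k idx x)) B"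
    using F k idx x B unfolding consistent_def by blast
  finally show "emeasure (distr (F n x) (powS S k) (proj k idx)) B = emeasure (F k (proj k idx x)) B" .
qed

lemma consistentI_distr:
  assumes kernels: "\<And>n. 1 \<le> n \<Longrightarrow> markov_kernel (powS S n) (F n)"
    and distr_proj: "\<And>n k idx x. 1 \<le> k \<Longrightarrow> k \<le> n \<Longrightarrow> \<forall>i<k. idx i < n \<Longrightarrow>
      x \<in> space (powS S n) \<Longrightarrow> distr (F n x) (powS S k) (proj k idx) = F k (proj k idx x)"
  shows "consistent S F"
  unfolding consistent_def
proof (intro conjI allI impI)
  fix n k idx x B
  assume "1 \<le> k \<and> k \<le> n \<and> (\<forall>i<k. idx i < n) \<and> x \<in> space (powS S n) \<and> B \<in> sets (powS S k)"
  then have k: "1 \<le> k" "k \<le> n" and idx: "\<forall>i<k. idx i < n"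
    and x: "x \<in> space (powS S n)" and B: "B \<in> sets (powS S k)"
    by auto
  have "emeasure (F n x) (proj k idx -` B \<inter> space (powS S n))
      = emeasure (distr (F n x) (powS S k) (proj k idx)) B"
    using kernels[of n] k idx x B by (intro emeasure_distr_proj[symmetric]) auto
  also have "\<dots> = emeasure (F k (proj k idx x)) B"
    using distr_proj[OF k idx x] by simp
  finally show "emeasure (F n x) (proj k idx -` B \<inter> space (powS S n)) = emeasure (F k (proj k idx x)) B" .
qed (use kernels in auto)

lemma consistent_cong:
  assumes F: "consistent S F"
    and eq: "\<And>n x. 1 \<le> n \<Longrightarrow> x \<in> space (powS S n) \<Longrightarrow> G n x = F n x"
  shows "consistent S G"
proof (rule consistentI_distr)
  fix n :: nat assume n: "1 \<le> n"
  have "F n \<in> powS S n \<rightarrow>\<^sub>M prob_algebra (powS S n)"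
    using F n unfolding consistent_def markov_kernel_def by simp
  then show "markov_kernel (powS S n) (G n)"
    unfolding markov_kernel_def by (rule measurable_cong[THEN iffD1, rotated]) (simp add: eq[OF n])
next
  fix n k idx x assume k: "1 \<le> k" "k \<le> n" and idx: "\<forall>i<k. idx i < n"
    and x: "x \<in> space (powS S n)"
  have "proj k idx x \<in> space (powS S k)"
    using measurable_proj[OF idx] x by (rule measurable_space)
  then have "G k (proj k idx x) = F k (proj k idx x)" and "G n x = F n x"
    using eq k x by auto
  then show "distr (G n x) (powS S k) (proj k idx) = G k (proj k idx x)"
    using consistent_distr_proj[OF F k idx x] by simp
qed

lemma consistent_kcomp:
  assumes F: "consistent S F" and G: "consistent S G"
  shows "consistent S (\<lambda>n. kcomp (F n) (G n))"
proof (rule consistentI_distr)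
  fix n :: nat assume "1 \<le> n"
  then show "markov_kernel (powS S n) (kcomp (F n) (G n))"
    using F G unfolding consistent_def by (intro markov_kernel_kcomp) auto
next
  fix n k idx x assume k: "1 \<le> k" "k \<le> n" and idx: "\<forall>i<k. idx i < n"
    and x: "x \<in> space (powS S n)"
  have Fn: "F n \<in> powS S n \<rightarrow>\<^sub>M prob_algebra (powS S n)"
    and Gn: "G n \<in> powS S n \<rightarrow>\<^sub>M prob_algebra (powS S n)"
    and Gk: "G k \<in> powS S k \<rightarrow>\<^sub>M prob_algebra (powS S k)"
    using F G k unfolding consistent_def markov_kernel_def by auto
  from measurable_space[OF Fn x]
  have sets_Fnx: "sets (F n x) = sets (powS S n)" and nonempty: "space (F n x) \<noteq> {}"
    by (auto simp: space_prob_algebra prob_space.not_empty)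
  then have space_Fnx: "space (F n x) = space (powS S n)"
    by (intro sets_eq_imp_space_eq)
  have p: "proj k idx \<in> F n x \<rightarrow>\<^sub>M powS S k"
    using measurable_proj[OF idx] unfolding measurable_cong_sets[OF sets_Fnx refl] .
  have Gn': "G n \<in> F n x \<rightarrow>\<^sub>M subprob_algebra (powS S n)"
    using measurable_prob_algebraD[OF Gn] unfolding measurable_cong_sets[OF sets_Fnx refl] .
  have "distr (F n x \<bind> G n) (powS S k) (proj k idx)
      = F n x \<bind> (\<lambda>y. distr (G n y) (powS S k) (proj k idx))"
    using Gn' nonempty measurable_proj[OF idx] by (rule distr_bind)
  also have "\<dots> = F n x \<bind> (\<lambda>y. G k (proj k idx y))"
    using consistent_distr_proj[OF G k idx] by (intro bind_cong) (auto simp: space_Fnx)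
  also have "\<dots> = distr (F n x) (powS S k) (proj k idx) \<bind> G k"
    using p measurable_prob_algebraD[OF Gk] nonempty by (rule bind_distr[symmetric])
  also have "\<dots> = F k (proj k idx x) \<bind> G k"
    by (simp add: consistent_distr_proj[OF F k idx x])
  finally show "distr (kcomp (F n) (G n) x) (powS S k) (proj k idx) = kcomp (F k) (G k) (proj k idx x)"
    unfolding kcomp_def .
qed

theorem lemma6p2:
  fixes S :: "'a measure"
    and K L :: "'a \<Rightarrow> 'a measure"
    and KK LL :: "nat \<Rightarrow> (nat \<Rightarrow> 'a) \<Rightarrow> (nat \<Rightarrow> 'a) measure"
  assumes "markov_kernel S K" and "markov_kernel S L"
    and "consistent_extension S K KK" and "consistent_extension S L LL"
  shows "consistent_extension S (kcomp K L) (\<lambda>n. kcomp (KK n) (LL n))"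
proof -
  let ?F = "\<lambda>n. if n = 1 then lift1 S K else KK n"
  let ?G = "\<lambda>n. if n = 1 then lift1 S L else LL n"
  have "consistent S (\<lambda>n. kcomp (?F n) (?G n))"
    using assms(3,4) unfolding consistent_extension_def by (rule consistent_kcomp)
  then show ?thesis
    unfolding consistent_extension_def
    by (rule consistent_cong) (auto simp: lift1_kcomp[OF assms(1,2)])
qed

end
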